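(* Let $\mathcal{C} \subseteq \mathbb{R}^n$ be a nonempty closed convex set, let $\theta^* \in \mathbb{R}^n$ (not necessarily in $\mathcal{C}$), let $Z$ be a random vector in $\mathbb{R}^n$ with $\mathbb{E} Z = 0$ and $\mathbb{E}\|Z\|^2 < \infty$, and for $\sigma > 0$ let $Y = \theta^* + \sigma Z$ and $\hat\theta(Y) = \Pi_{\mathcal{C}}(Y)$. Suppose the following "locally polyhedral" condition holds: $T_{\mathcal{C}}(\Pi_{\mathcal{C}}(\theta^* ))$ is a polyhedral cone, and there exists $r^* > 0$ such that $$T_{\mathcal{C}}(\Pi_{\mathcal{C}}(\theta^* )) \cap B_{r^*}(0) = F_{\mathcal{C}}(\Pi_{\mathcal{C}}(\theta^* )) \cap B_{r^*}(0).$$ Then $$\lim_{\sigma \downarrow 0} \frac{1}{\sigma^2} M(\hat\theta,\theta^* ) = \lim_{\sigma \downarrow 0} \frac{1}{\sigma^2} E(\hat\theta,\theta^* ) = \delta\big(T_{\mathcal{C}}(\Pi_{\mathcal{C}}(\theta^* )) \cap (\theta^* - \Pi_{\mathcal{C}}(\theta^* ))^\perp\big).$$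
   Context: $\|\cdot\|$ is the Euclidean norm and $\Pi_{\mathcal{C}}(x) = \arg\min_{\theta \in \mathcal{C}} \|x - \theta\|^2$ is the Euclidean projection onto a closed convex set. $B_r(x) = \{u : \|u - x\| \le r\}$. For $v \in \mathbb{R}^n$, $v^\perp = \{u : \langle u, v\rangle = 0\}$. For $\theta_0 \in \mathcal{C}$: $F_{\mathcal{C}}(\theta_0) = \{\theta - \theta_0 : \theta \in \mathcal{C}\}$, and the tangent cone is $T_{\mathcal{C}}(\theta_0) = \mathrm{cl}\{\alpha(\theta - \theta_0) : \alpha \ge 0, \theta \in \mathcal{C}\}$. A polyhedral cone is a set $\{x : Ax \le 0\}$ for a matrix $A$. The misspecified risk is $M(\hat\theta,\theta^* ) = \mathbb{E}\|\hat\theta(Y) - \Pi_{\mathcal{C}}(\theta^* )\|^2$ and the excess risk is $E(\hat\theta,\theta^* ) = \mathbb{E}\|\hat\theta(Y) - \theta^*\|^2 - \|\Pi_{\mathcal{C}}(\theta^* ) - \theta^*\|^2$, with expectations over $Z$. For a closed convex cone $T$, the (generalized) statistical dimension is $\delta(T) = \mathbb{E}\|\Pi_T(Z)\|^2$, the expectation being with respect to the distribution of $Z$. *)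

theory Defs
  imports "HOL-Probability.Probability"
begin

abbreviation proj :: "('a::euclidean_space) set \<Rightarrow> 'a \<Rightarrow> 'a" where
  "proj S x \<equiv> closest_point S x"

definition feasible_dirs :: "('a::euclidean_space) set \<Rightarrow> 'a \<Rightarrow> 'a set" where
  "feasible_dirs C t0 = {t - t0 | t. t \<in> C}"

definition tangent_cone :: "('a::euclidean_space) set \<Rightarrow> 'a \<Rightarrow> 'a set" where
  "tangent_cone C t0 = closure {a *\<^sub>R (t - t0) | a t. a \<ge> 0 \<and> t \<in> C}"

text \<open>Polyhedral cone {x. A x \<le> 0}: the rows of the matrix A form a finite list of vectors.\<close>
definition polyhedral_cone :: "('a::euclidean_space) set \<Rightarrow> bool" where
  "polyhedral_cone K \<longleftrightarrow> (\<exists>rows :: 'a list. K = {x. \<forall>a\<in>set rows. inner a x \<le> 0})"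

definition orth :: "('a::euclidean_space) \<Rightarrow> 'a set" where
  "orth v = {u. inner u v = 0}"

definition stat_dim :: "'b measure \<Rightarrow> ('b \<Rightarrow> 'a::euclidean_space) \<Rightarrow> 'a set \<Rightarrow> real" where
  "stat_dim M Z T = (\<integral>\<omega>. (norm (proj T (Z \<omega>)))\<^sup>2 \<partial>M)"

definition misspec_risk :: "'b measure \<Rightarrow> ('b \<Rightarrow> 'a::euclidean_space) \<Rightarrow> 'a set \<Rightarrow> 'a \<Rightarrow> real \<Rightarrow> real" where
  "misspec_risk M Z C th s = (\<integral>\<omega>. (norm (proj C (th + s *\<^sub>R Z \<omega>) - proj C th))\<^sup>2 \<partial>M)"

definition excess_risk :: "'b measure \<Rightarrow> ('b \<Rightarrow> 'a::euclidean_space) \<Rightarrow> 'a set \<Rightarrow> 'a \<Rightarrow> real \<Rightarrow> real" where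
  "excess_risk M Z C th s = (\<integral>\<omega>. (norm (proj C (th + s *\<^sub>R Z \<omega>) - th))\<^sup>2 \<partial>M)
       - (norm (proj C th - th))\<^sup>2"

end

theory Submission
  imports Defs
begin

text \<open>Let \<open>t0 = \<Pi>(\<theta>*)\<close>, \<open>v = \<theta>* - t0\<close>, \<open>T\<close> the tangent cone at \<open>t0\<close> and
  \<open>K = T \<inter> v\<^sup>\<perp>\<close>. For every fixed \<open>z\<close>, \<open>\<Pi>(\<theta>* + s z) = t0 + s \<Pi>\<^sub>K(z)\<close> for all small
  \<open>s > 0\<close>: the candidate lies in \<open>C\<close> because \<open>T\<close> agrees with the feasible directions near \<open>0\<close>,
  and it is optimal because, by Farkas' lemma for the polyhedral cone \<open>T\<close>, the residual
  \<open>v + s (z - \<Pi>\<^sub>K z)\<close> is a normal vector of \<open>C\<close> there. So both risks divided by \<open>s\<^sup>2\<close>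
  converge pointwise to \<open>\<parallel>\<Pi>\<^sub>K Z\<parallel>\<^sup>2\<close>, and dominated convergence applies with dominating function
  \<open>\<parallel>Z\<parallel>\<^sup>2\<close>: the projection is 1-Lipschitz, and the component of its displacement along \<open>v\<close>
  is quadratic in the perturbation.\<close>

lemma integral_dominated_convergence_at_right:
  fixes g :: "real \<Rightarrow> 'b \<Rightarrow> real" and f w :: "'b \<Rightarrow> real"
  assumes "f \<in> borel_measurable M" "\<And>t. g t \<in> borel_measurable M" "integrable M w"
    and lim: "\<And>x. x \<in> space M \<Longrightarrow> ((\<lambda>t. g t x) \<longlongrightarrow> f x) (at_right a)"
    and bound: "\<And>t x. t > a \<Longrightarrow> x \<in> space M \<Longrightarrow> norm (g t x) \<le> w x"
  shows "((\<lambda>t. integral\<^sup>L M (g t)) \<longlongrightarrow> integral\<^sup>L M f) (at_right a)"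
proof (rule tendsto_at_right_sequentially[of a "a + 1"])
  fix S :: "nat \<Rightarrow> real"
  assume S: "\<And>n. a < S n" "\<And>n. S n < a + 1" "decseq S" "S \<longlonglongrightarrow> a"
  have "filterlim S (at_right a) sequentially"
    using S by (intro tendsto_imp_filterlim_at_right) (auto intro: always_eventually)
  then show "(\<lambda>n. integral\<^sup>L M (g (S n))) \<longlonglongrightarrow> integral\<^sup>L M f"
    using assms S(1)
    by (intro integral_dominated_convergence[where w=w])
       (auto intro!: AE_I2 intro: filterlim_compose[OF lim])
qed simp

lemma closest_point_eqI:
  fixes S :: "'a::euclidean_space set"
  assumes "convex S" "closed S" "x \<in> S"
    and normal: "\<And>y. y \<in> S \<Longrightarrow> inner (a - x) (y - x) \<le> 0"
  shows "closest_point S a = x"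
proof -
  have "dist a x \<le> dist a y" if "y \<in> S" for y
  proof -
    have "(dist a y)\<^sup>2 = (norm (a - x))\<^sup>2 - 2 * inner (a - x) (y - x) + (norm (y - x))\<^sup>2"
      by (simp add: dist_norm power2_norm_eq_inner inner_diff inner_commute)
    also have "\<dots> \<ge> (dist a x)\<^sup>2"
      using normal[OF that] by (simp add: dist_norm) (use zero_le_power2[of "norm (y - x)"] in linarith)
    finally show ?thesis by (simp add: power2_le_iff_abs_le)
  qed
  then show ?thesis
    using closest_point_unique[OF assms(1-3)] by metis
qed

lemma closest_point_diff_inner_residual:
  fixes S :: "'a::euclidean_space set"
  assumes "convex S" "closed S" "S \<noteq> {}"
  shows "\<bar>inner (closest_point S (x + y) - closest_point S x) (x - closest_point S x)\<bar> \<le> (norm y)\<^sup>2"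
proof -
  define p where "p = closest_point S x"
  define d where "d = closest_point S (x + y) - p"
  have pS: "p \<in> S" and qS: "p + d \<in> S"
    unfolding p_def d_def using closest_point_in_set assms by auto
  have normal_x: "inner (x - p) d \<le> 0"
    using closest_point_dot[OF assms(1,2) qS, of x] unfolding p_def by simp
  have "inner (x + y - (p + d)) (p - (p + d)) \<le> 0"
    using closest_point_dot[OF assms(1,2) pS, of "x + y"] unfolding d_def by simp
  then have "- inner (x - p) d \<le> inner y d - (norm d)\<^sup>2"
    by (simp add: inner_diff_left inner_diff_right inner_add_left inner_add_right
        power2_norm_eq_inner inner_commute)
  also have "\<dots> \<le> norm y * norm d"
    using Cauchy_Schwarz_ineq2[of y d] abs_ge_self[of "inner y d"] zero_le_power2[of "norm d"]
    by linarith
  also have "\<dots> \<le> norm y * norm y"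
    using closest_point_lipschitz[OF assms, of "x + y" x]
    by (intro mult_left_mono) (simp_all add: d_def p_def dist_norm)
  finally show ?thesis
    using normal_x by (simp add: d_def p_def inner_commute power2_eq_square)
qed

lemma mem_convex_cone_hull_if_polar:
  fixes G :: "'a::euclidean_space set"
  assumes "finite G" and polar: "\<And>x. (\<forall>g\<in>G. inner g x \<le> 0) \<Longrightarrow> inner w x \<le> 0"
  shows "w \<in> convex_cone hull G"
proof (rule ccontr)
  let ?Q = "convex_cone hull G"
  assume "w \<notin> ?Q"
  then obtain a b where ab: "inner a w < b" "\<forall>x\<in>?Q. inner a x > b"
    using separating_hyperplane_closed_point[OF convex_convex_cone_hull
        closed_convex_cone_hull[OF assms(1)]] by blast
  have "b < inner a 0"
    using ab(2) convex_cone_hull_contains_0 by blast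
  then have b: "b < 0"
    by simp
  have nonneg: "inner a x \<ge> 0" if "x \<in> ?Q" for x
  proof (rule ccontr)
    assume neg: "\<not> inner a x \<ge> 0"
    then have "(b / inner a x) *\<^sub>R x \<in> ?Q"
      using that b by (intro convex_cone_hull_mul) (auto simp: divide_nonpos_neg)
    then have "b < inner a ((b / inner a x) *\<^sub>R x)"
      using ab(2) by blast
    then show False
      using neg by simp
  qed
  have "\<forall>g\<in>G. inner g (- a) \<le> 0"
  proof
    fix g assume "g \<in> G"
    then have "g \<in> ?Q"
      by (rule hull_inc)
    then have "inner a g \<ge> 0"
      by (rule nonneg)
    then show "inner g (- a) \<le> 0"
      by (simp add: inner_commute[of g a])
  qed
  then have "inner w (- a) \<le> 0"
    by (rule polar)
  then show False
    using ab b by (simp add: inner_commute)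
qed

text \<open>This is where polyhedrality enters: for a general closed convex cone \<open>T\<close> no finite
  multiple \<open>\<mu>\<close> need exist.\<close>
lemma polyhedral_cone_polar_face:
  fixes R :: "'a::euclidean_space set"
  assumes "finite R" and T: "T = {x. \<forall>a\<in>R. inner a x \<le> 0}"
    and v: "\<And>u. u \<in> T \<Longrightarrow> inner v u \<le> 0"
    and w: "\<And>k. k \<in> T \<Longrightarrow> inner k v = 0 \<Longrightarrow> inner w k \<le> 0"
  obtains \<mu> where "\<mu> \<ge> 0" "\<And>u. u \<in> T \<Longrightarrow> inner (w + \<mu> *\<^sub>R v) u \<le> 0"
proof -
  have "w \<in> convex_cone hull ({- v} \<union> R)"
  proof (rule mem_convex_cone_hull_if_polar)
    show "finite ({- v} \<union> R)"
      using assms(1) by simp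
    fix x assume x: "\<forall>g\<in>{- v} \<union> R. inner g x \<le> 0"
    then have "x \<in> T"
      unfolding T by simp
    moreover have "inner v x \<ge> 0"
      using x by simp
    ultimately show "inner w x \<le> 0"
      using v w by (force simp: inner_commute)
  qed
  moreover have "convex_cone hull {- v} = (\<Union>c\<in>{0..}. {c *\<^sub>R (- v)})"
    by (simp add: convex_cone_hull_convex_hull_nonempty)
  ultimately obtain c q where cq: "c \<ge> 0" "q \<in> convex_cone hull R" "w = c *\<^sub>R (- v) + q"
    unfolding convex_cone_hull_Un by auto
  have polar_R: "convex_cone hull R \<subseteq> {q. \<forall>u\<in>T. inner q u \<le> 0}"
  proof (rule hull_minimal)
    show "R \<subseteq> {q. \<forall>u\<in>T. inner q u \<le> 0}"
      unfolding T by auto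
    have "{q. \<forall>u\<in>T. inner q u \<le> 0} = (\<Inter>u\<in>T. {q. inner u q \<le> 0})"
      by (auto simp: inner_commute)
    then show "convex_cone {q. \<forall>u\<in>T. inner q u \<le> 0}"
      by (auto intro!: convex_cone_Inter simp: convex_cone_halfspace_le)
  qed
  have "w + c *\<^sub>R v = q"
    using cq(3) by simp
  then have "w + c *\<^sub>R v \<in> {q. \<forall>u\<in>T. inner q u \<le> 0}"
    using polar_R cq(2) by blast
  then show ?thesis
    using that[OF cq(1)] by blast
qed

lemma closest_point_cone_orthogonal:
  fixes K :: "'a::euclidean_space set"
  assumes "convex_cone K" "closed K"
  shows "inner (z - closest_point K z) (closest_point K z) = 0"
proof -
  let ?p = "closest_point K z"
  have K: "convex K" "K \<noteq> {}" "conic K"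
    using assms(1) unfolding convex_cone_def by auto
  then have "?p \<in> K"
    using closest_point_in_set assms(2) by blast
  then have "2 *\<^sub>R ?p \<in> K" "0 \<in> K"
    using conic_mul[OF K(3), of ?p 2] conic_contains_0[OF K(3)] K(2) by simp_all
  from closest_point_dot[OF K(1) assms(2) this(1), where a=z]
    closest_point_dot[OF K(1) assms(2) this(2), where a=z]
  have "inner (z - ?p) ?p \<le> 0" "inner (z - ?p) ?p \<ge> 0"
    by (simp_all add: scaleR_2)
  then show ?thesis
    by linarith
qed

lemma closest_point_cone_polar:
  fixes K :: "'a::euclidean_space set"
  assumes "convex_cone K" "closed K" "k \<in> K"
  shows "inner (z - closest_point K z) k \<le> 0"
proof -
  have "inner (z - closest_point K z) (k - closest_point K z) \<le> 0"
    using closest_point_dot assms unfolding convex_cone_def by blast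
  then show ?thesis
    using closest_point_cone_orthogonal[OF assms(1,2), of z] by (simp add: inner_diff_right)
qed

lemma closed_polyhedral_cone: "polyhedral_cone K \<Longrightarrow> closed K"
  unfolding polyhedral_cone_def
  by (auto simp: Collect_ball_eq intro!: closed_INT closed_halfspace_le)

lemma convex_cone_polyhedral_cone: "polyhedral_cone K \<Longrightarrow> convex_cone K"
  unfolding polyhedral_cone_def convex_cone_iff
  by (auto simp: inner_add_right mult_nonneg_nonpos) (meson add_nonpos_nonpos)

lemma orth_eq_hyperplane: "orth v = {u. inner v u = 0}"
  unfolding orth_def by (auto simp: inner_commute)

lemma closed_orth: "closed (orth v)"
  unfolding orth_eq_hyperplane by (rule closed_hyperplane)

lemma convex_cone_orth: "convex_cone (orth v)"
  unfolding orth_eq_hyperplane convex_cone_iff by (auto simp: inner_add_right)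

lemma convex_cone_Int: "convex_cone S \<Longrightarrow> convex_cone T \<Longrightarrow> convex_cone (S \<inter> T)"
  using convex_cone_Inter[of "{S, T}"] by auto

lemma polyhedral_cone_Int_orth:
  assumes "polyhedral_cone T"
  shows "convex_cone (T \<inter> orth v)" "closed (T \<inter> orth v)"
  using convex_cone_Int[OF convex_cone_polyhedral_cone[OF assms] convex_cone_orth]
    closed_Int[OF closed_polyhedral_cone[OF assms] closed_orth] by blast+

lemma diff_mem_tangent_cone: "t \<in> C \<Longrightarrow> t - t0 \<in> tangent_cone C t0"
  unfolding tangent_cone_def
  by (rule subsetD[OF closure_subset]) (auto intro!: exI[of _ 1])

lemma inner_residual_tangent_cone_le:
  fixes C :: "'a::euclidean_space set"
  assumes "convex C" "closed C" "u \<in> tangent_cone C (closest_point C x)"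
  shows "inner (x - closest_point C x) u \<le> 0"
proof -
  let ?p = "closest_point C x"
  have "{a *\<^sub>R (t - ?p) | a t. a \<ge> 0 \<and> t \<in> C} \<subseteq> {u. inner (x - ?p) u \<le> 0}"
    using closest_point_dot[OF assms(1,2), where a=x] by (auto intro!: mult_nonneg_nonpos)
  then have "tangent_cone C ?p \<subseteq> {u. inner (x - ?p) u \<le> 0}"
    unfolding tangent_cone_def by (intro closure_minimal) (auto simp: closed_halfspace_le)
  then show ?thesis
    using assms(3) by blast
qed

text \<open>The residual \<open>v + s w = (1 - s \<mu>) v + s (w + \<mu> v)\<close> is a nonnegative combination of
  normals of \<open>C\<close> at \<open>t0\<close> and is orthogonal to \<open>p\<close>, hence normal at \<open>t0 + s p\<close> as well.\<close>
lemma closest_point_eq_by_certificate: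
  fixes C :: "'a::euclidean_space set"
  assumes "convex C" "closed C" "t0 + s *\<^sub>R p \<in> C" "s \<ge> 0" "s * \<mu> \<le> 1"
    and normal: "\<And>c. c \<in> C \<Longrightarrow> inner v (c - t0) \<le> 0"
    and polar: "\<And>c. c \<in> C \<Longrightarrow> inner (w + \<mu> *\<^sub>R v) (c - t0) \<le> 0"
    and "inner v p = 0" "inner w p = 0"
  shows "closest_point C (t0 + v + s *\<^sub>R (p + w)) = t0 + s *\<^sub>R p"
proof (rule closest_point_eqI[OF assms(1-3)])
  fix c assume "c \<in> C"
  have residual: "t0 + v + s *\<^sub>R (p + w) - (t0 + s *\<^sub>R p) = (1 - s * \<mu>) *\<^sub>R v + s *\<^sub>R (w + \<mu> *\<^sub>R v)"
    by (simp add: algebra_simps)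
  have "inner ((1 - s * \<mu>) *\<^sub>R v + s *\<^sub>R (w + \<mu> *\<^sub>R v)) (c - t0) \<le> 0"
    using normal[OF \<open>c \<in> C\<close>] polar[OF \<open>c \<in> C\<close>] assms(4,5)
    by (simp add: inner_add_left add_nonpos_nonpos mult_nonneg_nonpos)
  moreover have "inner ((1 - s * \<mu>) *\<^sub>R v + s *\<^sub>R (w + \<mu> *\<^sub>R v)) p = 0"
    using assms(8,9) by (simp add: inner_add_left)
  ultimately show "inner (t0 + v + s *\<^sub>R (p + w) - (t0 + s *\<^sub>R p)) (c - (t0 + s *\<^sub>R p)) \<le> 0"
    unfolding residual by (simp add: inner_diff_right inner_add_right)
qed

lemma closest_point_locally_linear:
  fixes C :: "'a::euclidean_space set"
  assumes C: "convex C" "closed C" "C \<noteq> {}"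
    and poly: "polyhedral_cone (tangent_cone C (proj C th))"
    and "r > 0"
    and local: "tangent_cone C (proj C th) \<inter> cball 0 r = feasible_dirs C (proj C th) \<inter> cball 0 r"
  shows "\<forall>\<^sub>F s in at_right 0. proj C (th + s *\<^sub>R z)
           = proj C th + s *\<^sub>R proj (tangent_cone C (proj C th) \<inter> orth (th - proj C th)) z"
proof -
  define t0 where "t0 = proj C th"
  define v where "v = th - t0"
  define T where "T = tangent_cone C t0"
  define K where "K = T \<inter> orth v"
  define p where "p = proj K z"
  obtain rows where rows: "T = {x. \<forall>a\<in>set rows. inner a x \<le> 0}"
    using poly unfolding polyhedral_cone_def T_def t0_def by blast
  have T: "convex_cone T"
    using convex_cone_polyhedral_cone poly unfolding T_def t0_def by blast
  have K: "convex_cone K" "closed K"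
    using polyhedral_cone_Int_orth[OF poly] unfolding K_def T_def t0_def by blast+
  have normal: "inner v u \<le> 0" if "u \<in> T" for u
    using inner_residual_tangent_cone_le[OF C(1,2)] that unfolding v_def T_def t0_def by blast
  have "p \<in> K"
    unfolding p_def using closest_point_in_set K convex_cone_nonempty by blast
  then have pT: "p \<in> T" and pv: "inner v p = 0"
    unfolding K_def orth_def by (auto simp: inner_commute)
  have zp: "inner (z - p) p = 0"
    unfolding p_def by (rule closest_point_cone_orthogonal[OF K])
  have "inner (z - p) k \<le> 0" if "k \<in> T" "inner k v = 0" for k
    using closest_point_cone_polar[OF K] that unfolding p_def K_def orth_def by blast
  then obtain \<mu> where \<mu>: "\<mu> \<ge> 0" "\<And>u. u \<in> T \<Longrightarrow> inner (z - p + \<mu> *\<^sub>R v) u \<le> 0"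
    using polyhedral_cone_polar_face[OF finite_set rows normal] by blast
  text \<open>For \<open>s < b\<close>, \<open>s p\<close> stays in the ball where \<open>T\<close> agrees with the feasible
    directions, and \<open>1 - s \<mu> \<ge> 0\<close>.\<close>
  define b where "b = min (r / (norm p + 1)) (1 / (\<mu> + 1))"
  have "b > 0"
    unfolding b_def using \<open>r > 0\<close> \<mu>(1) by (simp add: add_nonneg_pos)
  have "proj C (th + s *\<^sub>R z) = t0 + s *\<^sub>R p" if s: "0 < s" "s < b" for s
  proof -
    have "s * (norm p + 1) < r"
      using s unfolding b_def by (simp add: pos_less_divide_eq add_nonneg_pos)
    then have "s *\<^sub>R p \<in> T \<inter> cball 0 r"
      using s pT T by (simp add: convex_cone_scaleR mult_nonneg_nonneg algebra_simps)
    then have "t0 + s *\<^sub>R p \<in> C"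
      using local unfolding feasible_dirs_def T_def t0_def by auto
    moreover have "s * \<mu> \<le> 1"
    proof -
      have "s * (\<mu> + 1) < 1"
        using s \<mu>(1) unfolding b_def by (simp add: pos_less_divide_eq)
      then show ?thesis
        using s by (simp add: algebra_simps)
    qed
    moreover have "th + s *\<^sub>R z = t0 + v + s *\<^sub>R (p + (z - p))"
      unfolding v_def by simp
    moreover have "c - t0 \<in> T" if "c \<in> C" for c
      unfolding T_def using diff_mem_tangent_cone[OF that] .
    ultimately show ?thesis
      using closest_point_eq_by_certificate[OF C(1,2), of t0 s p \<mu> v "z - p"]
        normal \<mu>(2) pv zp s(1) by (simp add: inner_commute[of p])
  qed
  then show ?thesis
    unfolding eventually_at_right_field t0_def p_def K_def T_def v_def
    using \<open>b > 0\<close> by blast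
qed

context
  fixes C K :: "'a::euclidean_space set" and th :: 'a and M :: "'b measure" and Z :: "'b \<Rightarrow> 'a"
  assumes C: "convex C" "closed C" "C \<noteq> {}"
    and K: "convex K" "closed K" "K \<noteq> {}"
    and Z: "Z \<in> borel_measurable M" "integrable M (\<lambda>\<omega>. (norm (Z \<omega>))\<^sup>2)"
    and lin: "\<And>z. \<forall>\<^sub>F s in at_right 0. proj C (th + s *\<^sub>R z) = proj C th + s *\<^sub>R proj K z"
begin

lemma borel_measurable_proj_displacement:
  "(\<lambda>\<omega>. proj C (th + s *\<^sub>R Z \<omega>) - proj C th) \<in> borel_measurable M"
proof -
  have "(\<lambda>\<omega>. th + s *\<^sub>R Z \<omega>) \<in> borel_measurable M"
    using Z(1) by measurable
  then have "(\<lambda>\<omega>. proj C (th + s *\<^sub>R Z \<omega>)) \<in> borel_measurable M"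
    by (rule borel_measurable_continuous_on[OF continuous_on_closest_point[OF C]])
  then show ?thesis
    by measurable
qed

lemma norm_proj_displacement_sq_le:
  "(norm (proj C (th + s *\<^sub>R Z \<omega>) - proj C th))\<^sup>2 \<le> s\<^sup>2 * (norm (Z \<omega>))\<^sup>2"
proof -
  have "norm (proj C (th + s *\<^sub>R Z \<omega>) - proj C th) \<le> \<bar>s\<bar> * norm (Z \<omega>)"
    using closest_point_lipschitz[OF C, of "th + s *\<^sub>R Z \<omega>" th] by (simp add: dist_norm)
  then have "(norm (proj C (th + s *\<^sub>R Z \<omega>) - proj C th))\<^sup>2 \<le> (\<bar>s\<bar> * norm (Z \<omega>))\<^sup>2"
    by (rule power_mono) simp
  then show ?thesis
    by (simp add: power_mult_distrib)
qed

lemma abs_inner_proj_displacement_le: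
  "\<bar>inner (proj C (th + s *\<^sub>R Z \<omega>) - proj C th) (th - proj C th)\<bar> \<le> s\<^sup>2 * (norm (Z \<omega>))\<^sup>2"
  using closest_point_diff_inner_residual[OF C, of th "s *\<^sub>R Z \<omega>"]
  by (simp add: power_mult_distrib)

lemma misspec_risk_tendsto:
  "((\<lambda>s. misspec_risk M Z C th s / s\<^sup>2) \<longlongrightarrow> stat_dim M Z K) (at_right 0)"
proof -
  have "((\<lambda>s. \<integral>\<omega>. (norm (proj C (th + s *\<^sub>R Z \<omega>) - proj C th))\<^sup>2 / s\<^sup>2 \<partial>M)
      \<longlongrightarrow> (\<integral>\<omega>. (norm (proj K (Z \<omega>)))\<^sup>2 \<partial>M)) (at_right 0)"
  proof (rule integral_dominated_convergence_at_right[where w="\<lambda>\<omega>. (norm (Z \<omega>))\<^sup>2"])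
    show "(\<lambda>\<omega>. (norm (proj K (Z \<omega>)))\<^sup>2) \<in> borel_measurable M"
      using borel_measurable_continuous_on[OF continuous_on_closest_point[OF K] Z(1)] by measurable
    show "(\<lambda>\<omega>. (norm (proj C (th + s *\<^sub>R Z \<omega>) - proj C th))\<^sup>2 / s\<^sup>2) \<in> borel_measurable M" for s
      using borel_measurable_proj_displacement by measurable
    show "norm ((norm (proj C (th + s *\<^sub>R Z \<omega>) - proj C th))\<^sup>2 / s\<^sup>2) \<le> (norm (Z \<omega>))\<^sup>2"
      if "s > 0" for s \<omega>
      using norm_proj_displacement_sq_le[of s \<omega>] that by (simp add: divide_le_eq mult.commute)
    show "((\<lambda>s. (norm (proj C (th + s *\<^sub>R Z \<omega>) - proj C th))\<^sup>2 / s\<^sup>2)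
        \<longlongrightarrow> (norm (proj K (Z \<omega>)))\<^sup>2) (at_right 0)" for \<omega>
      using lin[of "Z \<omega>"] eventually_at_right_less[of 0]
      by (intro tendsto_eventually, eventually_elim) (simp add: power_mult_distrib)
  qed (fact Z(2))
  then show ?thesis
    by (simp add: misspec_risk_def stat_dim_def)
qed

lemma cross_term_tendsto:
  assumes "K \<subseteq> orth (th - proj C th)"
  shows "((\<lambda>s. (\<integral>\<omega>. inner (proj C (th + s *\<^sub>R Z \<omega>) - proj C th) (th - proj C th) \<partial>M) / s\<^sup>2)
           \<longlongrightarrow> 0) (at_right 0)"
proof -
  have "((\<lambda>s. \<integral>\<omega>. inner (proj C (th + s *\<^sub>R Z \<omega>) - proj C th) (th - proj C th) / s\<^sup>2 \<partial>M)
      \<longlongrightarrow> (\<integral>\<omega>. 0 \<partial>M)) (at_right 0)"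
  proof (rule integral_dominated_convergence_at_right[where w="\<lambda>\<omega>. (norm (Z \<omega>))\<^sup>2"])
    show "(\<lambda>\<omega>. inner (proj C (th + s *\<^sub>R Z \<omega>) - proj C th) (th - proj C th) / s\<^sup>2)
        \<in> borel_measurable M" for s
      using borel_measurable_proj_displacement by measurable
    show "norm (inner (proj C (th + s *\<^sub>R Z \<omega>) - proj C th) (th - proj C th) / s\<^sup>2)
        \<le> (norm (Z \<omega>))\<^sup>2" if "s > 0" for s \<omega>
      using abs_inner_proj_displacement_le[of s \<omega>] that by (simp add: divide_le_eq mult.commute)
    have orth_K: "inner (proj K (Z \<omega>)) (th - proj C th) = 0" for \<omega>
      using assms closest_point_in_set[OF K(2,3)] unfolding orth_def by blast
    show "((\<lambda>s. inner (proj C (th + s *\<^sub>R Z \<omega>) - proj C th) (th - proj C th) / s\<^sup>2)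
        \<longlongrightarrow> 0) (at_right 0)" for \<omega>
      using lin[of "Z \<omega>"] by (intro tendsto_eventually, eventually_elim) (simp add: orth_K)
  qed (simp_all add: Z(2))
  then show ?thesis
    by simp
qed

lemma excess_risk_eq:
  assumes "prob_space M"
  shows "excess_risk M Z C th s = misspec_risk M Z C th s
           - 2 * (\<integral>\<omega>. inner (proj C (th + s *\<^sub>R Z \<omega>) - proj C th) (th - proj C th) \<partial>M)"
proof -
  interpret prob_space M
    by (rule assms)
  define D where "D \<omega> = proj C (th + s *\<^sub>R Z \<omega>) - proj C th" for \<omega>
  define v where "v = th - proj C th"
  have bound: "integrable M (\<lambda>\<omega>. s\<^sup>2 * (norm (Z \<omega>))\<^sup>2)"
    using Z(2) by simp
  have int_sq: "integrable M (\<lambda>\<omega>. (norm (D \<omega>))\<^sup>2)"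
    using borel_measurable_proj_displacement norm_proj_displacement_sq_le
    by (intro Bochner_Integration.integrable_bound[OF bound]) (auto simp: D_def)
  have int_inner: "integrable M (\<lambda>\<omega>. 2 * inner (D \<omega>) v)"
    using borel_measurable_proj_displacement abs_inner_proj_displacement_le
    by (intro integrable_mult_right Bochner_Integration.integrable_bound[OF bound])
      (auto simp: D_def v_def)
  have "(norm (proj C (th + s *\<^sub>R Z \<omega>) - th))\<^sup>2 = (norm (D \<omega>))\<^sup>2 - 2 * inner (D \<omega>) v + (norm v)\<^sup>2"
    for \<omega>
  proof -
    have "proj C (th + s *\<^sub>R Z \<omega>) - th = D \<omega> - v"
      by (simp add: D_def v_def)
    then show ?thesis
      by (simp add: power2_norm_eq_inner inner_diff_left inner_diff_right inner_commute)
  qed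
  then have "excess_risk M Z C th s
      = (\<integral>\<omega>. (norm (D \<omega>))\<^sup>2 - 2 * inner (D \<omega>) v + (norm v)\<^sup>2 \<partial>M) - (norm v)\<^sup>2"
    by (simp add: excess_risk_def v_def norm_minus_commute)
  also have "\<dots> = (\<integral>\<omega>. (norm (D \<omega>))\<^sup>2 \<partial>M) - (\<integral>\<omega>. 2 * inner (D \<omega>) v \<partial>M)"
    using int_sq int_inner by (simp add: prob_space)
  finally show ?thesis
    by (simp add: misspec_risk_def D_def v_def)
qed

lemma excess_risk_tendsto:
  assumes "prob_space M" "K \<subseteq> orth (th - proj C th)"
  shows "((\<lambda>s. excess_risk M Z C th s / s\<^sup>2) \<longlongrightarrow> stat_dim M Z K) (at_right 0)"
proof -
  have "((\<lambda>s. misspec_risk M Z C th s / s\<^sup>2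
      - 2 * ((\<integral>\<omega>. inner (proj C (th + s *\<^sub>R Z \<omega>) - proj C th) (th - proj C th) \<partial>M) / s\<^sup>2))
      \<longlongrightarrow> stat_dim M Z K - 2 * 0) (at_right 0)"
    using tendsto_diff[OF misspec_risk_tendsto tendsto_mult[OF tendsto_const cross_term_tendsto[OF assms(2)]]]
    by simp
  then show ?thesis
    by (simp add: excess_risk_eq[OF assms(1)] diff_divide_distrib)
qed

end

theorem theorem1:
  fixes C :: "(real ^ 'n) set" and th :: "real ^ 'n"
    and M :: "'b measure" and Z :: "'b \<Rightarrow> real ^ 'n" and rstar :: real
  assumes "C \<noteq> {}" and "closed C" and "convex C"
    and "prob_space M"
    and "Z \<in> borel_measurable M"
    and "integrable M Z" and "(\<integral>\<omega>. Z \<omega> \<partial>M) = 0"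
    and "integrable M (\<lambda>\<omega>. (norm (Z \<omega>))\<^sup>2)"
    and "polyhedral_cone (tangent_cone C (proj C th))"
    and "rstar > 0"
    and "tangent_cone C (proj C th) \<inter> cball 0 rstar
           = feasible_dirs C (proj C th) \<inter> cball 0 rstar"
  shows "((\<lambda>s. misspec_risk M Z C th s / s\<^sup>2) \<longlongrightarrow>
            stat_dim M Z (tangent_cone C (proj C th) \<inter> orth (th - proj C th))) (at_right 0) \<and>
         ((\<lambda>s. excess_risk M Z C th s / s\<^sup>2) \<longlongrightarrow>
            stat_dim M Z (tangent_cone C (proj C th) \<inter> orth (th - proj C th))) (at_right 0)"
proof -
  let ?K = "tangent_cone C (proj C th) \<inter> orth (th - proj C th)"
  have C: "convex C" "closed C" "C \<noteq> {}"
    using assms(1-3) by auto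
  from polyhedral_cone_Int_orth[OF assms(9)] have K: "convex ?K" "closed ?K" "?K \<noteq> {}"
    unfolding convex_cone_def by auto
  note lin = closest_point_locally_linear[OF C assms(9-11)]
  show ?thesis
    using misspec_risk_tendsto[OF C K assms(5,8) lin]
      excess_risk_tendsto[OF C K assms(5,8) lin assms(4) Int_lower2] by blast
qed

end
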